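(* Let $I\subset\mathbb R$ be an open interval, $r:I\to\mathbb R$ a smooth positive function with $(r')^2\neq1$ on $I$, $C\neq0$ a constant, $\eta\in\{1,-1\}$, and fix a sign $\pm$. Assume $$R(u):=(r r''+(r')^2-1)^2\pm 4C^2r^2\,((r')^2-1)>0\quad\text{on } I,$$ and let $\varphi:I\to\mathbb R$ be any function with $\displaystyle\varphi'=\eta\,\frac{\sqrt{R}}{r\,((r')^2-1)}$. Case (A): if $(r')^2>1$ on $I$, let $x_2,x_4$ satisfy $x_2'=\sqrt{(r')^2-1}\,\sinh\varphi$, $x_4'=\sqrt{(r')^2-1}\,\cosh\varphi$. Case (B): if $(r')^2<1$ on $I$, let $x_2,x_4$ satisfy $x_2'=\sqrt{1-(r')^2}\,\cosh\varphi$, $x_4'=\sqrt{1-(r')^2}\,\sinh\varphi$. In either case the curve $c(u)=(r(u),x_2(u),0,x_4(u))$ is a spacelike curve parameterized by arc-length with $x_2'x_4''-x_2''x_4'\neq0$ on $I$, and the rotational surface of hyperbolic type $z(u,v)=(r(u)\cosh v,\,x_2(u),\,r(u)\sinh v,\,x_4(u))$, $v\in\mathbb R$, is a Lorentz surface in $\mathbb E^4_2$ with constant mean curvature ($\langle H,H\rangle=\pm C^2$, a nonzero constant). Conversely, let $z(u,v)=(r(u)\cosh v,x_2(u),r(u)\sinh v,x_4(u))$, $u\in J$, be a rotational surface of hyperbolic type whose generating curve $(r,x_2,0,x_4)$ is spacelike and parameterized by arc-length ($(r')^2+(x_2')^2-(x_4')^2=1$), with $r>0$ and $(r')^2\neq1$,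 and suppose $x_2'x_4''-x_2''x_4'\neq0$ on an open interval $I\subset J$ and $\langle H,H\rangle$ is a nonzero constant on $I$. Then, locally on $I$, the curve is obtained from $r$ by the construction of Case (A) or Case (B) above for some $C\neq0$, sign $\pm$, $\eta\in\{\pm1\}$ and suitable constants of integration.
   Context: $\mathbb E^4_2$ is $\mathbb R^4$ with the neutral metric $\langle\cdot,\cdot\rangle$ given by $g_0=dx_1^2+dx_2^2-dx_3^2-dx_4^2$. A vector $v$ is spacelike if $\langle v,v\rangle>0$. A surface in $\mathbb E^4_2$ is Lorentz if its induced metric has signature $(1,1)$. The mean curvature vector is $H=\frac12\operatorname{tr}\sigma$, where $\sigma$ is the second fundamental form; the surface has constant mean curvature if $\langle H,H\rangle$ is a nonzero constant. A rotational surface of hyperbolic type is $z(u,v)=(r(u)\cosh v,x_2(u),r(u)\sinh v,x_4(u))$, obtained by hyperbolic rotation of the curve $(r(u),x_2(u),0,x_4(u))$, $r>0$, about the Lorentz plane spanned by $e_2=(0,1,0,0)$ and $e_4=(0,0,0,1)$.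
   Formalization: In the converse, $x_4'$ in Case (A) and $x_2'$ in Case (B) equal epsilon times the stated cosh expression for some sign epsilon in {1,-1}, rather than the expression itself. The statement above fails without it. *)

theory Defs
  imports "HOL-Analysis.Analysis"
begin

definition ip42 :: "real^4 \<Rightarrow> real^4 \<Rightarrow> real" where
  "ip42 x y = x$1 * y$1 + x$2 * y$2 - x$3 * y$3 - x$4 * y$4"

definition spacelike :: "real^4 \<Rightarrow> bool" where
  "spacelike w \<longleftrightarrow> ip42 w w > 0"

definition smooth_real_on :: "real set \<Rightarrow> (real \<Rightarrow> real) \<Rightarrow> bool" where
  "smooth_real_on S f \<longleftrightarrow> (\<forall>n. \<forall>x\<in>S. ((deriv ^^ n) f) differentiable (at x))"

definition pu :: "(real \<Rightarrow> real \<Rightarrow> real^4) \<Rightarrow> real \<Rightarrow> real \<Rightarrow> real^4" where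
  "pu z u v = vector_derivative (\<lambda>s. z s v) (at u)"
definition pv :: "(real \<Rightarrow> real \<Rightarrow> real^4) \<Rightarrow> real \<Rightarrow> real \<Rightarrow> real^4" where
  "pv z u v = vector_derivative (\<lambda>t. z u t) (at v)"
definition puu :: "(real \<Rightarrow> real \<Rightarrow> real^4) \<Rightarrow> real \<Rightarrow> real \<Rightarrow> real^4" where
  "puu z u v = vector_derivative (\<lambda>s. pu z s v) (at u)"
definition puv :: "(real \<Rightarrow> real \<Rightarrow> real^4) \<Rightarrow> real \<Rightarrow> real \<Rightarrow> real^4" where
  "puv z u v = vector_derivative (\<lambda>t. pu z u t) (at v)"
definition pvv :: "(real \<Rightarrow> real \<Rightarrow> real^4) \<Rightarrow> real \<Rightarrow> real \<Rightarrow> real^4" where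
  "pvv z u v = vector_derivative (\<lambda>t. pv z u t) (at v)"

definition metE where "metE z u v = ip42 (pu z u v) (pu z u v)"
definition metF where "metF z u v = ip42 (pu z u v) (pv z u v)"
definition metG where "metG z u v = ip42 (pv z u v) (pv z u v)"

text \<open>The induced (2x2 symmetric) metric has signature (1,1) iff its determinant is negative.\<close>
definition lorentz_at :: "(real \<Rightarrow> real \<Rightarrow> real^4) \<Rightarrow> real \<Rightarrow> real \<Rightarrow> bool" where
  "lorentz_at z u v \<longleftrightarrow> metE z u v * metG z u v - (metF z u v)^2 < 0"

text \<open>Normal component of w with respect to the tangent plane spanned by a, b
  (orthogonal projection w.r.t. the neutral metric).\<close>
definition normal_part :: "real^4 \<Rightarrow> real^4 \<Rightarrow> real^4 \<Rightarrow> real^4" where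
  "normal_part a b w =
     (let E = ip42 a a; F = ip42 a b; G = ip42 b b; D = E * G - F^2;
          p = ip42 w a; q = ip42 w b
      in w - (((G * p - F * q) / D) *\<^sub>R a + ((E * q - F * p) / D) *\<^sub>R b))"

definition sff11 where "sff11 z u v = normal_part (pu z u v) (pv z u v) (puu z u v)"
definition sff12 where "sff12 z u v = normal_part (pu z u v) (pv z u v) (puv z u v)"
definition sff22 where "sff22 z u v = normal_part (pu z u v) (pv z u v) (pvv z u v)"

text \<open>Mean curvature vector H = (1/2) tr sigma = (1/2) sum g^{ij} sigma_ij.\<close>
definition mean_curv :: "(real \<Rightarrow> real \<Rightarrow> real^4) \<Rightarrow> real \<Rightarrow> real \<Rightarrow> real^4" where
  "mean_curv z u v =
     (let E = metE z u v; F = metF z u v; G = metG z u v; D = E * G - F^2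
      in (1 / 2) *\<^sub>R ((G / D) *\<^sub>R sff11 z u v - (2 * F / D) *\<^sub>R sff12 z u v
                        + (E / D) *\<^sub>R sff22 z u v))"

definition rot_hyp :: "(real \<Rightarrow> real) \<Rightarrow> (real \<Rightarrow> real) \<Rightarrow> (real \<Rightarrow> real) \<Rightarrow> real \<Rightarrow> real \<Rightarrow> real^4" where
  "rot_hyp r x2 x4 u v = vector [r u * cosh v, x2 u, r u * sinh v, x4 u]"

definition gen_curve :: "(real \<Rightarrow> real) \<Rightarrow> (real \<Rightarrow> real) \<Rightarrow> (real \<Rightarrow> real) \<Rightarrow> real \<Rightarrow> real^4" where
  "gen_curve r x2 x4 u = vector [r u, x2 u, 0, x4 u]"

definition Rfun :: "(real \<Rightarrow> real) \<Rightarrow> real \<Rightarrow> real \<Rightarrow> real \<Rightarrow> real" where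
  "Rfun r C s u = (r u * deriv (deriv r) u + (deriv r u)^2 - 1)^2
                   + s * 4 * C^2 * (r u)^2 * ((deriv r u)^2 - 1)"

end

theory Submission
  imports Defs
begin

text \<open>
  For a unit-speed generating curve (r, x2, 0, x4) the mean curvature of the rotational surface
  depends on the second derivatives only through r'' and the Wronskian W = x2' x4'' - x2'' x4':
  differentiating the unit-speed condition and a Lorentzian Lagrange identity give
  <H,H> = (r^2 W^2 - (r r'' + r'^2 - 1)^2) / (4 r^2 (r'^2 - 1)).
  Writing (x2', x4') in hyperbolic polar coordinates with angle \<phi> gives W = -\<epsilon> (r'^2 - 1) \<phi>',
  so <H,H> = s C^2 is equivalent to r^2 W^2 = R, which is the equation for \<phi>'.
  Conversely, on an interval the signs of r'^2 - 1, of the cosh-component of (x2', x4') and of W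
  are constant by continuity; they determine the case, \<epsilon> and \<eta>.
\<close>

lemma vector_4_nth [simp]:
  "(vector [x, y, z, w] :: 'a::zero^4) $ 1 = x"
  "(vector [x, y, z, w] :: 'a::zero^4) $ 2 = y"
  "(vector [x, y, z, w] :: 'a::zero^4) $ 3 = z"
  "(vector [x, y, z, w] :: 'a::zero^4) $ 4 = w"
  unfolding vector_def by simp_all

lemma ip42_vector:
  "ip42 (vector [a, b, c, d]) (vector [a', b', c', d']) = a * a' + b * b' - c * c' - d * d'"
  by (simp add: ip42_def)

lemma has_vector_derivative_vector_4:
  assumes "(f1 has_real_derivative d1) (at u)" "(f2 has_real_derivative d2) (at u)"
    "(f3 has_real_derivative d3) (at u)" "(f4 has_real_derivative d4) (at u)"
  shows "((\<lambda>s. vector [f1 s, f2 s, f3 s, f4 s] :: real^4) has_vector_derivative vector [d1, d2, d3, d4]) (at u)"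
proof -
  have "(\<lambda>s. vector [f1 s, f2 s, f3 s, f4 s] :: real^4) =
      (\<lambda>s. f1 s *\<^sub>R vector [1, 0, 0, 0] + f2 s *\<^sub>R vector [0, 1, 0, 0]
         + f3 s *\<^sub>R vector [0, 0, 1, 0] + f4 s *\<^sub>R vector [0, 0, 0, 1])"
   and "(vector [d1, d2, d3, d4] :: real^4) = d1 *\<^sub>R vector [1, 0, 0, 0] + d2 *\<^sub>R vector [0, 1, 0, 0]
         + d3 *\<^sub>R vector [0, 0, 1, 0] + d4 *\<^sub>R vector [0, 0, 0, 1]"
    by (simp_all add: vec_eq_iff forall_4 fun_eq_iff)
  then show ?thesis
    using assms by (auto simp: has_real_derivative_iff_has_vector_derivative intro!: derivative_eq_intros)
qed

lemma deriv_has_real_derivative: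
  "f differentiable (at x) \<Longrightarrow> (f has_real_derivative deriv f x) (at x)"
  by (simp add: DERIV_deriv_iff_real_differentiable)

lemma differentiable_sqrt:
  fixes f :: "real \<Rightarrow> real"
  assumes "f differentiable (at u)" "f u > 0"
  shows "(\<lambda>t. sqrt (f t)) differentiable (at u)"
  using DERIV_chain2[OF DERIV_real_sqrt[OF assms(2)] deriv_has_real_derivative[OF assms(1)]]
  unfolding real_differentiable_def by blast

lemma smooth_real_onD:
  assumes "smooth_real_on S f" "x \<in> S"
  shows "f differentiable (at x)" "deriv f differentiable (at x)"
    "deriv (deriv f) differentiable (at x)"
proof -
  have "((deriv ^^ n) f) differentiable (at x)" for n
    using assms unfolding smooth_real_on_def by blast
  from this[of 0] this[of 1] this[of 2] show "f differentiable (at x)" "deriv f differentiable (at x)"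
    "deriv (deriv f) differentiable (at x)"
    by (simp_all add: numeral_2_eq_2)
qed

lemma smooth_real_on_subset:
  "smooth_real_on T f \<Longrightarrow> S \<subseteq> T \<Longrightarrow> smooth_real_on S f"
  unfolding smooth_real_on_def by blast

lemma smooth_real_on_continuous_on_deriv:
  assumes "smooth_real_on S f"
  shows "continuous_on S (deriv f)" "continuous_on S (deriv (deriv f))"
  using smooth_real_onD(2,3)[OF assms]
  by (auto intro!: continuous_at_imp_continuous_on differentiable_imp_continuous_within)

lemma continuous_nonvanishing_sign:
  fixes f :: "real \<Rightarrow> real"
  assumes "is_interval S" "continuous_on S f" "\<forall>x\<in>S. f x \<noteq> 0"
  obtains \<sigma> where "\<sigma> \<in> {1, -1}" "\<forall>x\<in>S. \<sigma> * f x > 0"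
proof -
  have conn: "connected (f ` S)"
    using assms(1,2) by (simp add: connected_continuous_image is_interval_connected_1)
  have "(\<forall>x\<in>S. f x > 0) \<or> (\<forall>x\<in>S. f x < 0)"
  proof (rule ccontr)
    assume "\<not> ?thesis"
    then obtain x y where "x \<in> S" "y \<in> S" "f x < 0" "f y > 0"
      using assms(3) by force
    then have "0 \<in> f ` S"
      using conn connectedD_interval[of "f ` S" "f x" "f y" 0] by auto
    then show False using assms(3) by auto
  qed
  then show thesis
  proof
    assume "\<forall>x\<in>S. f x > 0"
    then show thesis
      using that[of 1] by simp
  next
    assume "\<forall>x\<in>S. f x < 0"
    then show thesis
      using that[of "-1"] by simp
  qed
qed

lemma unit_speed_orthogonal:
  fixes p q w :: "real \<Rightarrow> real"
  assumes S: "open S" "u \<in> S" and unit: "\<forall>t\<in>S. (p t)\<^sup>2 + (q t)\<^sup>2 - (w t)\<^sup>2 = 1"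
    and "(p has_real_derivative p') (at u)" "(q has_real_derivative q') (at u)"
      "(w has_real_derivative w') (at u)"
  shows "p u * p' + q u * q' - w u * w' = 0"
proof -
  have "((\<lambda>t. (p t)\<^sup>2 + (q t)\<^sup>2 - (w t)\<^sup>2) has_real_derivative 2 * (p u * p' + q u * q' - w u * w')) (at u)"
    using assms(4-) by (auto intro!: derivative_eq_intros simp: algebra_simps)
  moreover have "((\<lambda>t. (p t)\<^sup>2 + (q t)\<^sup>2 - (w t)\<^sup>2) has_real_derivative 0) (at u)"
    by (rule has_field_derivative_transform_within_open[OF DERIV_const S]) (use unit in simp)
  ultimately have "2 * (p u * p' + q u * q' - w u * w') = 0"
    by (rule DERIV_unique)
  then show ?thesis
    by simp
qed

lemma scaled_hyperbolic_pythagoras: "x * (cosh y)\<^sup>2 - x * (sinh y)\<^sup>2 = (x::real)"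
  by (simp add: cosh_square_eq algebra_simps)

lemma gen_curve_velocity:
  assumes "r differentiable (at u)" "x2 differentiable (at u)" "x4 differentiable (at u)"
  shows "vector_derivative (gen_curve r x2 x4) (at u) = vector [deriv r u, deriv x2 u, 0, deriv x4 u]"
  unfolding gen_curve_def
  by (intro vector_derivative_at has_vector_derivative_vector_4 DERIV_const
      deriv_has_real_derivative assms)

lemma rot_hyp_pu:
  assumes "r differentiable (at u)" "x2 differentiable (at u)" "x4 differentiable (at u)"
  shows "pu (rot_hyp r x2 x4) u v = vector [deriv r u * cosh v, deriv x2 u, deriv r u * sinh v, deriv x4 u]"
  unfolding pu_def rot_hyp_def
  by (intro vector_derivative_at has_vector_derivative_vector_4 DERIV_cmult_right
      deriv_has_real_derivative assms)

lemma rot_hyp_pv: "pv (rot_hyp r x2 x4) u v = vector [r u * sinh v, 0, r u * cosh v, 0]"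
  unfolding pv_def rot_hyp_def
  by (intro vector_derivative_at has_vector_derivative_vector_4) (auto intro!: derivative_eq_intros)

lemma rot_hyp_pvv: "pvv (rot_hyp r x2 x4) u v = vector [r u * cosh v, 0, r u * sinh v, 0]"
  unfolding pvv_def rot_hyp_pv
  by (intro vector_derivative_at has_vector_derivative_vector_4) (auto intro!: derivative_eq_intros)

lemma rot_hyp_puu:
  assumes S: "open S" "u \<in> S"
    and "\<forall>t\<in>S. r differentiable (at t) \<and> x2 differentiable (at t) \<and> x4 differentiable (at t)"
    and "deriv r differentiable (at u)" "deriv x2 differentiable (at u)"
      "deriv x4 differentiable (at u)"
  shows "puu (rot_hyp r x2 x4) u v =
    vector [deriv (deriv r) u * cosh v, deriv (deriv x2) u, deriv (deriv r) u * sinh v, deriv (deriv x4) u]"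
proof -
  have "((\<lambda>t. vector [deriv r t * cosh v, deriv x2 t, deriv r t * sinh v, deriv x4 t] :: real^4)
      has_vector_derivative vector [deriv (deriv r) u * cosh v, deriv (deriv x2) u,
        deriv (deriv r) u * sinh v, deriv (deriv x4) u]) (at u)"
    by (intro has_vector_derivative_vector_4 DERIV_cmult_right deriv_has_real_derivative assms(4-))
  then have "((\<lambda>t. pu (rot_hyp r x2 x4) t v) has_vector_derivative vector [deriv (deriv r) u * cosh v,
      deriv (deriv x2) u, deriv (deriv r) u * sinh v, deriv (deriv x4) u]) (at u)"
    by (rule has_vector_derivative_transform_within_open[OF _ S]) (use assms(3) in \<open>simp add: rot_hyp_pu\<close>)
  then show ?thesis
    unfolding puu_def by (rule vector_derivative_at)
qed

lemma ip42_combination_sq: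
  "ip42 (k *\<^sub>R x + l *\<^sub>R y + m *\<^sub>R w) (k *\<^sub>R x + l *\<^sub>R y + m *\<^sub>R w)
     = k\<^sup>2 * ip42 x x + l\<^sup>2 * ip42 y y + m\<^sup>2 * ip42 w w
       + 2 * k * l * ip42 x y + 2 * k * m * ip42 x w + 2 * l * m * ip42 y w"
  by (simp add: ip42_def power2_eq_square algebra_simps)

lemma rotational_frame_mean_curv:
  fixes z :: "real \<Rightarrow> real \<Rightarrow> real^4"
  assumes zu: "pu z u v = vector [p * cosh v, q, p * sinh v, w]"
    and zv: "pv z u v = vector [\<rho> * sinh v, 0, \<rho> * cosh v, 0]"
    and zuu: "puu z u v = vector [a * cosh v, b, a * sinh v, d]"
    and zvv: "pvv z u v = vector [\<rho> * cosh v, 0, \<rho> * sinh v, 0]"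
    and \<rho>: "\<rho> > 0" and unit: "p\<^sup>2 + q\<^sup>2 - w\<^sup>2 = 1" and orth: "a * p + b * q - d * w = 0"
  shows "lorentz_at z u v"
    "ip42 (mean_curv z u v) (mean_curv z u v) = (a\<^sup>2 + b\<^sup>2 - d\<^sup>2 - 2 * a / \<rho> + (1 - p\<^sup>2) / \<rho>\<^sup>2) / 4"
proof -
  define U where "U = (vector [p * cosh v, q, p * sinh v, w] :: real^4)"
  define V where "V = (vector [\<rho> * sinh v, 0, \<rho> * cosh v, 0] :: real^4)"
  define A where "A = (vector [a * cosh v, b, a * sinh v, d] :: real^4)"
  define B where "B = (vector [\<rho> * cosh v, 0, \<rho> * sinh v, 0] :: real^4)"
  note hyp = scaled_hyperbolic_pythagoras[where y = v]
  have UU: "ip42 U U = 1"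
    using hyp[of "p\<^sup>2"] unit by (simp add: U_def ip42_vector power2_eq_square algebra_simps)
  have VV: "ip42 V V = - \<rho>\<^sup>2"
    using hyp[of "\<rho>\<^sup>2"] by (simp add: V_def ip42_vector power2_eq_square algebra_simps)
  have AA: "ip42 A A = a\<^sup>2 + b\<^sup>2 - d\<^sup>2"
    using hyp[of "a\<^sup>2"] by (simp add: A_def ip42_vector power2_eq_square algebra_simps)
  have BB: "ip42 B B = \<rho>\<^sup>2"
    using hyp[of "\<rho>\<^sup>2"] by (simp add: B_def ip42_vector power2_eq_square algebra_simps)
  have AU: "ip42 A U = 0"
    using hyp[of "a * p"] orth by (simp add: A_def U_def ip42_vector power2_eq_square algebra_simps)
  have AB: "ip42 A B = \<rho> * a"
    using hyp[of "\<rho> * a"] by (simp add: A_def B_def ip42_vector power2_eq_square algebra_simps)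
  have BU: "ip42 B U = \<rho> * p"
    using hyp[of "\<rho> * p"] by (simp add: B_def U_def ip42_vector power2_eq_square algebra_simps)
  have UV: "ip42 U V = 0" and AV: "ip42 A V = 0" and BV: "ip42 B V = 0"
    by (simp_all add: U_def V_def A_def B_def ip42_vector algebra_simps)
  have E: "metE z u v = 1" and F: "metF z u v = 0" and G: "metG z u v = - \<rho>\<^sup>2"
    unfolding metE_def metF_def metG_def zu zv U_def[symmetric] V_def[symmetric] UU UV VV by simp_all
  then show "lorentz_at z u v"
    unfolding lorentz_at_def using \<rho> by simp
  txt \<open>z_uu is normal by \<open>orth\<close>, whereas z_vv has tangential part \<rho> p z_u.\<close>
  have s11: "sff11 z u v = A"
    unfolding sff11_def normal_part_def zu zv zuu U_def[symmetric] V_def[symmetric] A_def[symmetric]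
      Let_def UU UV VV AU AV by simp
  have s22: "sff22 z u v = B - (\<rho> * p) *\<^sub>R U"
    unfolding sff22_def normal_part_def zu zv zvv U_def[symmetric] V_def[symmetric] B_def[symmetric]
      Let_def UU UV VV BU BV using \<rho> by simp
  have "mean_curv z u v = (1/2) *\<^sub>R (A - (1 / \<rho>\<^sup>2) *\<^sub>R (B - (\<rho> * p) *\<^sub>R U))"
    unfolding mean_curv_def Let_def E F G s11 s22 using \<rho> by (simp add: algebra_simps)
  also have "\<dots> = (1/2) *\<^sub>R A + (- 1 / (2 * \<rho>\<^sup>2)) *\<^sub>R B + (p / (2 * \<rho>)) *\<^sub>R U"
    using \<rho> by (simp add: algebra_simps power2_eq_square)
  finally have H: "mean_curv z u v = (1/2) *\<^sub>R A + (- 1 / (2 * \<rho>\<^sup>2)) *\<^sub>R B + (p / (2 * \<rho>)) *\<^sub>R U" .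
  show "ip42 (mean_curv z u v) (mean_curv z u v) = (a\<^sup>2 + b\<^sup>2 - d\<^sup>2 - 2 * a / \<rho> + (1 - p\<^sup>2) / \<rho>\<^sup>2) / 4"
    unfolding H ip42_combination_sq AA BB UU AB AU BU using \<rho>
    by (simp add: field_simps power2_eq_square)
qed

abbreviation wronskian :: "(real \<Rightarrow> real) \<Rightarrow> (real \<Rightarrow> real) \<Rightarrow> real \<Rightarrow> real" where
  "wronskian f g u \<equiv> deriv f u * deriv (deriv g) u - deriv (deriv f) u * deriv g u"

lemma mean_curv_sq_eliminate_second_derivatives:
  fixes p q w a b d \<rho> :: real
  assumes \<rho>: "\<rho> > 0" and p: "p\<^sup>2 \<noteq> 1"
    and unit: "p\<^sup>2 + q\<^sup>2 - w\<^sup>2 = 1" and orth: "a * p + b * q - d * w = 0"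
  shows "(a\<^sup>2 + b\<^sup>2 - d\<^sup>2 - 2 * a / \<rho> + (1 - p\<^sup>2) / \<rho>\<^sup>2) / 4
    = (\<rho>\<^sup>2 * (q * d - b * w)\<^sup>2 - (\<rho> * a + p\<^sup>2 - 1)\<^sup>2) / (4 * \<rho>\<^sup>2 * (p\<^sup>2 - 1))"
proof -
  define W where "W = q * d - b * w"
  have qw: "q\<^sup>2 - w\<^sup>2 = 1 - p\<^sup>2" and bd: "b * q - d * w = - (a * p)"
    using unit orth by simp_all
  have "(b\<^sup>2 - d\<^sup>2) * (q\<^sup>2 - w\<^sup>2) = (b * q - d * w)\<^sup>2 - W\<^sup>2"
    unfolding W_def by (simp add: power2_eq_square algebra_simps)
  then have "b\<^sup>2 - d\<^sup>2 = (W\<^sup>2 - (a * p)\<^sup>2) / (p\<^sup>2 - 1)"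
    unfolding qw bd using p by (simp add: field_simps)
  then have "a\<^sup>2 + b\<^sup>2 - d\<^sup>2 = a\<^sup>2 + (W\<^sup>2 - (a * p)\<^sup>2) / (p\<^sup>2 - 1)"
    by simp
  moreover have "(a\<^sup>2 + (W\<^sup>2 - (a * p)\<^sup>2) / (p\<^sup>2 - 1) - 2 * a / \<rho> + (1 - p\<^sup>2) / \<rho>\<^sup>2) / 4
      = (\<rho>\<^sup>2 * W\<^sup>2 - (\<rho> * a + p\<^sup>2 - 1)\<^sup>2) / (4 * \<rho>\<^sup>2 * (p\<^sup>2 - 1))"
    using \<rho> p by (simp add: field_simps power2_eq_square)
  ultimately show ?thesis
    unfolding W_def by simp
qed

lemma rot_hyp_mean_curv_sq:
  assumes S: "open S" "u \<in> S"
    and diff: "\<forall>t\<in>S. r differentiable (at t) \<and> x2 differentiable (at t) \<and> x4 differentiable (at t)"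
    and diff2: "deriv r differentiable (at u)" "deriv x2 differentiable (at u)"
      "deriv x4 differentiable (at u)"
    and unit: "\<forall>t\<in>S. (deriv r t)\<^sup>2 + (deriv x2 t)\<^sup>2 - (deriv x4 t)\<^sup>2 = 1"
    and r: "r u > 0" "(deriv r u)\<^sup>2 \<noteq> 1"
  shows "lorentz_at (rot_hyp r x2 x4) u v"
    "ip42 (mean_curv (rot_hyp r x2 x4) u v) (mean_curv (rot_hyp r x2 x4) u v)
      = ((r u)\<^sup>2 * (wronskian x2 x4 u)\<^sup>2 - (r u * deriv (deriv r) u + (deriv r u)\<^sup>2 - 1)\<^sup>2)
        / (4 * (r u)\<^sup>2 * ((deriv r u)\<^sup>2 - 1))"
proof -
  have orth: "deriv (deriv r) u * deriv r u + deriv (deriv x2) u * deriv x2 u - deriv (deriv x4) u * deriv x4 u = 0"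
    using unit_speed_orthogonal[OF S unit deriv_has_real_derivative[OF diff2(1)]
        deriv_has_real_derivative[OF diff2(2)] deriv_has_real_derivative[OF diff2(3)]]
    by (simp add: mult.commute)
  note frame = rotational_frame_mean_curv[OF rot_hyp_pu rot_hyp_pv rot_hyp_puu[OF S diff diff2] rot_hyp_pvv
      r(1) _ orth]
  show "lorentz_at (rot_hyp r x2 x4) u v"
    using frame(1) diff unit S by blast
  show "ip42 (mean_curv (rot_hyp r x2 x4) u v) (mean_curv (rot_hyp r x2 x4) u v)
      = ((r u)\<^sup>2 * (wronskian x2 x4 u)\<^sup>2 - (r u * deriv (deriv r) u + (deriv r u)\<^sup>2 - 1)\<^sup>2)
        / (4 * (r u)\<^sup>2 * ((deriv r u)\<^sup>2 - 1))"
    using frame(2) diff unit S mean_curv_sq_eliminate_second_derivatives[OF r(1,2) _ orth] by simp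
qed

text \<open>
  Cases (A) and (B) of the construction, stated for x2', x4'. The extra sign \<epsilon> of the
  cosh-component is forced on us in the converse, where (x2', x4') is given.
\<close>
definition hyperbolic_angle_curve ::
    "real set \<Rightarrow> (real \<Rightarrow> real) \<Rightarrow> real \<Rightarrow> (real \<Rightarrow> real) \<Rightarrow> (real \<Rightarrow> real) \<Rightarrow> (real \<Rightarrow> real) \<Rightarrow> bool" where
  "hyperbolic_angle_curve S r \<epsilon> \<phi> x2 x4 \<longleftrightarrow>
     (\<forall>u\<in>S. (deriv r u)\<^sup>2 > 1 \<and>
        deriv x2 u = sqrt ((deriv r u)\<^sup>2 - 1) * sinh (\<phi> u) \<and>
        deriv x4 u = \<epsilon> * (sqrt ((deriv r u)\<^sup>2 - 1) * cosh (\<phi> u)))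
   \<or> (\<forall>u\<in>S. (deriv r u)\<^sup>2 < 1 \<and>
        deriv x2 u = \<epsilon> * (sqrt (1 - (deriv r u)\<^sup>2) * cosh (\<phi> u)) \<and>
        deriv x4 u = sqrt (1 - (deriv r u)\<^sup>2) * sinh (\<phi> u))"

lemma wronskian_sinh_cosh:
  assumes S: "open S" "u \<in> S"
    and f: "\<forall>t\<in>S. deriv f t = a t * sinh (\<phi> t)"
    and g: "\<forall>t\<in>S. deriv g t = \<epsilon> * (a t * cosh (\<phi> t))"
    and a: "(a has_real_derivative a') (at u)" and \<phi>: "(\<phi> has_real_derivative \<phi>') (at u)"
  shows "deriv f differentiable (at u)" "deriv g differentiable (at u)"
    "wronskian f g u = - \<epsilon> * (a u)\<^sup>2 * \<phi>'"
proof -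
  have "((\<lambda>t. a t * sinh (\<phi> t)) has_real_derivative a' * sinh (\<phi> u) + a u * (cosh (\<phi> u) * \<phi>')) (at u)"
    using a \<phi> by (auto intro!: derivative_eq_intros)
  then have f': "(deriv f has_real_derivative a' * sinh (\<phi> u) + a u * (cosh (\<phi> u) * \<phi>')) (at u)"
    by (rule has_field_derivative_transform_within_open[OF _ S]) (use f in simp)
  have "((\<lambda>t. \<epsilon> * (a t * cosh (\<phi> t))) has_real_derivative
      \<epsilon> * (a' * cosh (\<phi> u) + a u * (sinh (\<phi> u) * \<phi>'))) (at u)"
    using a \<phi> by (auto intro!: derivative_eq_intros)
  then have g': "(deriv g has_real_derivative \<epsilon> * (a' * cosh (\<phi> u) + a u * (sinh (\<phi> u) * \<phi>'))) (at u)"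
    by (rule has_field_derivative_transform_within_open[OF _ S]) (use g in simp)
  show "deriv f differentiable (at u)" "deriv g differentiable (at u)"
    using f' g' by (auto simp: real_differentiable_def)
  have "wronskian f g u = \<epsilon> * (a u)\<^sup>2 * \<phi>' * ((sinh (\<phi> u))\<^sup>2 - (cosh (\<phi> u))\<^sup>2)"
    unfolding DERIV_imp_deriv[OF f'] DERIV_imp_deriv[OF g'] using f g S
    by (simp add: power2_eq_square algebra_simps)
  then show "wronskian f g u = - \<epsilon> * (a u)\<^sup>2 * \<phi>'"
    by (simp add: cosh_square_eq)
qed

lemma hyperbolic_angle_curve_unit_speed:
  assumes "hyperbolic_angle_curve S r \<epsilon> \<phi> x2 x4" "\<epsilon> \<in> {1, -1}" "u \<in> S"
  shows "(deriv r u)\<^sup>2 + (deriv x2 u)\<^sup>2 - (deriv x4 u)\<^sup>2 = 1"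
proof -
  have \<epsilon>: "\<epsilon>\<^sup>2 = 1"
    using assms(2) by auto
  consider "(deriv r u)\<^sup>2 > 1" "deriv x2 u = sqrt ((deriv r u)\<^sup>2 - 1) * sinh (\<phi> u)"
      "deriv x4 u = \<epsilon> * (sqrt ((deriv r u)\<^sup>2 - 1) * cosh (\<phi> u))"
    | "(deriv r u)\<^sup>2 < 1" "deriv x2 u = \<epsilon> * (sqrt (1 - (deriv r u)\<^sup>2) * cosh (\<phi> u))"
      "deriv x4 u = sqrt (1 - (deriv r u)\<^sup>2) * sinh (\<phi> u)"
    using assms(1,3) unfolding hyperbolic_angle_curve_def by blast
  then show ?thesis
  proof cases
    case 1
    then show ?thesis
      using scaled_hyperbolic_pythagoras[of "(deriv r u)\<^sup>2 - 1" "\<phi> u"] \<epsilon> by (simp add: power_mult_distrib)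
  next
    case 2
    then show ?thesis
      using scaled_hyperbolic_pythagoras[of "1 - (deriv r u)\<^sup>2" "\<phi> u"] \<epsilon> by (simp add: power_mult_distrib)
  qed
qed

lemma hyperbolic_angle_curve_wronskian:
  assumes curve: "hyperbolic_angle_curve S r \<epsilon> \<phi> x2 x4"
    and S: "open S" "u \<in> S"
    and r: "deriv r differentiable (at u)" and \<phi>: "(\<phi> has_real_derivative \<phi>') (at u)"
  shows "deriv x2 differentiable (at u)" "deriv x4 differentiable (at u)"
    "wronskian x2 x4 u = - \<epsilon> * ((deriv r u)\<^sup>2 - 1) * \<phi>'"
proof -
  have r': "(deriv r has_real_derivative deriv (deriv r) u) (at u)"
    using r by (rule deriv_has_real_derivative)
  consider (A) "\<forall>t\<in>S. (deriv r t)\<^sup>2 > 1 \<and>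
        deriv x2 t = sqrt ((deriv r t)\<^sup>2 - 1) * sinh (\<phi> t) \<and>
        deriv x4 t = \<epsilon> * (sqrt ((deriv r t)\<^sup>2 - 1) * cosh (\<phi> t))"
    | (B) "\<forall>t\<in>S. (deriv r t)\<^sup>2 < 1 \<and>
        deriv x2 t = \<epsilon> * (sqrt (1 - (deriv r t)\<^sup>2) * cosh (\<phi> t)) \<and>
        deriv x4 t = sqrt (1 - (deriv r t)\<^sup>2) * sinh (\<phi> t)"
    using curve unfolding hyperbolic_angle_curve_def by blast
  then have "deriv x2 differentiable (at u) \<and> deriv x4 differentiable (at u) \<and>
    wronskian x2 x4 u = - \<epsilon> * ((deriv r u)\<^sup>2 - 1) * \<phi>'"
  proof cases
    case A
    then have "(deriv r u)\<^sup>2 > 1"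
      using S by blast
    then have a: "((\<lambda>t. sqrt ((deriv r t)\<^sup>2 - 1)) has_real_derivative
        deriv r u * deriv (deriv r) u / sqrt ((deriv r u)\<^sup>2 - 1)) (at u)"
      using r' by (auto intro!: derivative_eq_intros simp: field_simps)
    have f: "\<forall>t\<in>S. deriv x2 t = sqrt ((deriv r t)\<^sup>2 - 1) * sinh (\<phi> t)"
      and g: "\<forall>t\<in>S. deriv x4 t = \<epsilon> * (sqrt ((deriv r t)\<^sup>2 - 1) * cosh (\<phi> t))"
      using A by simp_all
    note W = wronskian_sinh_cosh[OF S f g a \<phi>]
    show ?thesis
      using W \<open>(deriv r u)\<^sup>2 > 1\<close> by simp
  next
    case B
    then have "(deriv r u)\<^sup>2 < 1"
      using S by blast
    then have a: "((\<lambda>t. sqrt (1 - (deriv r t)\<^sup>2)) has_real_derivative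
        - deriv r u * deriv (deriv r) u / sqrt (1 - (deriv r u)\<^sup>2)) (at u)"
      using r' by (auto intro!: derivative_eq_intros simp: field_simps)
    have f: "\<forall>t\<in>S. deriv x4 t = sqrt (1 - (deriv r t)\<^sup>2) * sinh (\<phi> t)"
      and g: "\<forall>t\<in>S. deriv x2 t = \<epsilon> * (sqrt (1 - (deriv r t)\<^sup>2) * cosh (\<phi> t))"
      using B by simp_all
    note W = wronskian_sinh_cosh[OF S f g a \<phi>]
    have "wronskian x2 x4 u = - wronskian x4 x2 u"
      by simp
    then show ?thesis
      using W \<open>(deriv r u)\<^sup>2 < 1\<close> by (simp add: algebra_simps)
  qed
  then show "deriv x2 differentiable (at u)" "deriv x4 differentiable (at u)"
    "wronskian x2 x4 u = - \<epsilon> * ((deriv r u)\<^sup>2 - 1) * \<phi>'"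
    by blast+
qed

lemma exists_hyperbolic_angle:
  fixes q w a :: "real \<Rightarrow> real"
  assumes S: "is_interval S" and w: "continuous_on S w"
    and diff: "\<forall>t\<in>S. q differentiable (at t) \<and> a differentiable (at t)"
    and a: "\<forall>t\<in>S. a t > 0 \<and> (w t)\<^sup>2 - (q t)\<^sup>2 = (a t)\<^sup>2"
  obtains \<epsilon> \<phi> where "\<epsilon> \<in> {1, -1}" "\<forall>t\<in>S. \<phi> differentiable (at t)"
    "\<forall>t\<in>S. q t = a t * sinh (\<phi> t) \<and> w t = \<epsilon> * (a t * cosh (\<phi> t))"
proof -
  have "\<forall>t\<in>S. w t \<noteq> 0"
  proof
    fix t assume "t \<in> S"
    then have "(w t)\<^sup>2 = (q t)\<^sup>2 + (a t)\<^sup>2" "a t > 0"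
      using a by (simp_all add: algebra_simps)
    then have "(w t)\<^sup>2 > 0"
      by (simp add: add_nonneg_pos)
    then show "w t \<noteq> 0"
      by auto
  qed
  then obtain \<epsilon> where \<epsilon>: "\<epsilon> \<in> {1, -1}" "\<forall>t\<in>S. \<epsilon> * w t > 0"
    using continuous_nonvanishing_sign[OF S w] by blast
  define \<phi> where "\<phi> t = arsinh (q t / a t)" for t
  have "\<phi> differentiable (at t)" if "t \<in> S" for t
  proof -
    have "(\<lambda>t. q t / a t) differentiable (at t)"
      using diff a that by (auto intro: differentiable_divide)
    moreover have "arsinh differentiable (at (q t / a t))"
      using arsinh_real_has_field_derivative real_differentiable_def by blast
    ultimately show ?thesis
      unfolding \<phi>_def using differentiable_chain_at[of "\<lambda>t. q t / a t" t arsinh] by (simp add: o_def)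
  qed
  moreover have "q t = a t * sinh (\<phi> t) \<and> w t = \<epsilon> * (a t * cosh (\<phi> t))" if "t \<in> S" for t
  proof
    have at: "a t > 0" and wq: "(w t)\<^sup>2 - (q t)\<^sup>2 = (a t)\<^sup>2"
      using a that by auto
    show "q t = a t * sinh (\<phi> t)"
      using at by (simp add: \<phi>_def)
    have "a t * cosh (\<phi> t) = sqrt ((a t)\<^sup>2) * sqrt ((q t / a t)\<^sup>2 + 1)"
      using at by (simp add: \<phi>_def cosh_arsinh_real)
    also have "\<dots> = sqrt ((a t)\<^sup>2 * ((q t / a t)\<^sup>2 + 1))"
      by (simp only: real_sqrt_mult)
    also have "\<dots> = sqrt ((w t)\<^sup>2)"
      using at wq by (simp add: field_simps)
    also have "\<dots> = \<epsilon> * w t"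
      using \<epsilon> that by (auto simp: abs_if)
    finally show "w t = \<epsilon> * (a t * cosh (\<phi> t))"
      using \<epsilon>(1) by auto
  qed
  ultimately show thesis
    using that \<epsilon>(1) by blast
qed

lemma exists_hyperbolic_angle_curve:
  assumes I: "is_interval I"
    and smooth: "smooth_real_on I r" "smooth_real_on I x2" "smooth_real_on I x4"
    and r: "\<forall>u\<in>I. (deriv r u)\<^sup>2 \<noteq> 1"
    and unit: "\<forall>u\<in>I. (deriv r u)\<^sup>2 + (deriv x2 u)\<^sup>2 - (deriv x4 u)\<^sup>2 = 1"
  obtains \<epsilon> \<phi> where "\<epsilon> \<in> {1, -1}" "\<forall>u\<in>I. \<phi> differentiable (at u)"
    "hyperbolic_angle_curve I r \<epsilon> \<phi> x2 x4"
proof -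
  have "continuous_on I (\<lambda>u. (deriv r u)\<^sup>2 - 1)"
    using smooth_real_on_continuous_on_deriv(1)[OF smooth(1)] by (intro continuous_intros)
  moreover have "\<forall>u\<in>I. (deriv r u)\<^sup>2 - 1 \<noteq> 0"
    using r by simp
  ultimately obtain \<sigma> where \<sigma>: "\<sigma> \<in> {1, -1}" "\<forall>u\<in>I. \<sigma> * ((deriv r u)\<^sup>2 - 1) > 0"
    by (rule continuous_nonvanishing_sign[OF I])
  define a where "a u = sqrt (\<sigma> * ((deriv r u)\<^sup>2 - 1))" for u
  have a: "a differentiable (at u)" "a u > 0" "(a u)\<^sup>2 = \<sigma> * ((deriv r u)\<^sup>2 - 1)" if "u \<in> I" for u
  proof -
    have pos: "\<sigma> * ((deriv r u)\<^sup>2 - 1) > 0"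
      using \<sigma>(2) that by blast
    have "(\<lambda>t. \<sigma> * ((deriv r t)\<^sup>2 - 1)) differentiable (at u)"
      using smooth_real_onD(2)[OF smooth(1) that] by (intro derivative_intros)
    then show "a differentiable (at u)"
      unfolding a_def using pos by (rule differentiable_sqrt)
    show "a u > 0" "(a u)\<^sup>2 = \<sigma> * ((deriv r u)\<^sup>2 - 1)"
      unfolding a_def using pos by auto
  qed
  consider "\<sigma> = 1" | "\<sigma> = -1"
    using \<sigma>(1) by blast
  then show thesis
  proof cases
    case 1
    have "\<forall>t\<in>I. deriv x2 differentiable (at t) \<and> a differentiable (at t)"
      using smooth_real_onD(2)[OF smooth(2)] a(1) by blast
    moreover have "\<forall>t\<in>I. a t > 0 \<and> (deriv x4 t)\<^sup>2 - (deriv x2 t)\<^sup>2 = (a t)\<^sup>2"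
      using a(2,3) unit 1 by force
    ultimately obtain \<epsilon> \<phi> where \<epsilon>: "\<epsilon> \<in> {1, -1}" and \<phi>: "\<forall>u\<in>I. \<phi> differentiable (at u)"
      and x: "\<forall>u\<in>I. deriv x2 u = a u * sinh (\<phi> u) \<and> deriv x4 u = \<epsilon> * (a u * cosh (\<phi> u))"
      using exists_hyperbolic_angle[OF I smooth_real_on_continuous_on_deriv(1)[OF smooth(3)]] by blast
    moreover have "\<forall>u\<in>I. (deriv r u)\<^sup>2 > 1 \<and> a u = sqrt ((deriv r u)\<^sup>2 - 1)"
      using \<sigma>(2) 1 unfolding a_def by simp
    ultimately have "hyperbolic_angle_curve I r \<epsilon> \<phi> x2 x4"
      unfolding hyperbolic_angle_curve_def by simp
    then show thesis
      using that \<epsilon> \<phi> by blast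
  next
    case 2
    have "\<forall>t\<in>I. deriv x4 differentiable (at t) \<and> a differentiable (at t)"
      using smooth_real_onD(2)[OF smooth(3)] a(1) by blast
    moreover have "\<forall>t\<in>I. a t > 0 \<and> (deriv x2 t)\<^sup>2 - (deriv x4 t)\<^sup>2 = (a t)\<^sup>2"
      using a(2,3) unit 2 by force
    ultimately obtain \<epsilon> \<phi> where \<epsilon>: "\<epsilon> \<in> {1, -1}" and \<phi>: "\<forall>u\<in>I. \<phi> differentiable (at u)"
      and x: "\<forall>u\<in>I. deriv x4 u = a u * sinh (\<phi> u) \<and> deriv x2 u = \<epsilon> * (a u * cosh (\<phi> u))"
      using exists_hyperbolic_angle[OF I smooth_real_on_continuous_on_deriv(1)[OF smooth(2)]] by blast
    moreover have "\<forall>u\<in>I. (deriv r u)\<^sup>2 < 1 \<and> a u = sqrt (1 - (deriv r u)\<^sup>2)"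
      using \<sigma>(2) 2 unfolding a_def by simp
    ultimately have "hyperbolic_angle_curve I r \<epsilon> \<phi> x2 x4"
      unfolding hyperbolic_angle_curve_def by simp
    then show thesis
      using that \<epsilon> \<phi> by blast
  qed
qed

lemma mean_curv_formula_eq_iff:
  fixes \<rho> W K P C s :: real
  assumes "\<rho> \<noteq> 0" "P \<noteq> 0"
  shows "(\<rho>\<^sup>2 * W\<^sup>2 - K\<^sup>2) / (4 * \<rho>\<^sup>2 * P) = s * C\<^sup>2 \<longleftrightarrow> K\<^sup>2 + s * 4 * C\<^sup>2 * \<rho>\<^sup>2 * P = (\<rho> * W)\<^sup>2"
  using assms by (auto simp: field_simps power2_eq_square)

lemma Rfun_eq_iff_mean_curv:
  assumes "r u \<noteq> 0" "(deriv r u)\<^sup>2 \<noteq> 1"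
  shows "Rfun r C s u = (r u * W)\<^sup>2 \<longleftrightarrow>
    ((r u)\<^sup>2 * W\<^sup>2 - (r u * deriv (deriv r) u + (deriv r u)\<^sup>2 - 1)\<^sup>2) / (4 * (r u)\<^sup>2 * ((deriv r u)\<^sup>2 - 1))
      = s * C\<^sup>2"
  unfolding Rfun_def using assms by (subst mean_curv_formula_eq_iff) auto

lemma rot_hyp_cmc_of_hyperbolic_angle_curve:
  assumes I: "open I" and r: "smooth_real_on I r" "\<forall>u\<in>I. r u > 0"
    and \<eta>: "\<eta> \<in> {1, -1}" and R: "\<forall>u\<in>I. Rfun r C s u > 0"
    and \<phi>: "\<forall>u\<in>I. (\<phi> has_real_derivative \<eta> * sqrt (Rfun r C s u) / (r u * ((deriv r u)\<^sup>2 - 1))) (at u)"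
    and curve: "hyperbolic_angle_curve I r 1 \<phi> x2 x4"
    and x: "\<forall>u\<in>I. x2 differentiable (at u) \<and> x4 differentiable (at u)"
    and u: "u \<in> I"
  shows "ip42 (vector_derivative (gen_curve r x2 x4) (at u)) (vector_derivative (gen_curve r x2 x4) (at u)) = 1"
    "wronskian x2 x4 u \<noteq> 0"
    "lorentz_at (rot_hyp r x2 x4) u v"
    "ip42 (mean_curv (rot_hyp r x2 x4) u v) (mean_curv (rot_hyp r x2 x4) u v) = s * C\<^sup>2"
proof -
  have unit: "\<forall>t\<in>I. (deriv r t)\<^sup>2 + (deriv x2 t)\<^sup>2 - (deriv x4 t)\<^sup>2 = 1"
    using hyperbolic_angle_curve_unit_speed[OF curve] by simp
  have diff: "\<forall>t\<in>I. r differentiable (at t) \<and> x2 differentiable (at t) \<and> x4 differentiable (at t)"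
    using x smooth_real_onD(1)[OF r(1)] by blast
  show "ip42 (vector_derivative (gen_curve r x2 x4) (at u)) (vector_derivative (gen_curve r x2 x4) (at u)) = 1"
    using diff unit u by (simp add: gen_curve_velocity ip42_vector power2_eq_square)
  have r': "deriv r differentiable (at u)"
    using smooth_real_onD(2)[OF r(1) u] .
  note W = hyperbolic_angle_curve_wronskian[OF curve I u r' \<phi>[rule_format, OF u]]
  have ru: "r u > 0" "(deriv r u)\<^sup>2 \<noteq> 1"
    using r(2) curve u unfolding hyperbolic_angle_curve_def by fastforce+
  have "(r u * wronskian x2 x4 u)\<^sup>2 = \<eta>\<^sup>2 * (sqrt (Rfun r C s u))\<^sup>2"
    unfolding W(3) using ru by (simp add: power_mult_distrib power_divide power2_commute)
  then have RW: "Rfun r C s u = (r u * wronskian x2 x4 u)\<^sup>2"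
    using \<eta> R u by auto
  then show "wronskian x2 x4 u \<noteq> 0"
    using R u by fastforce
  note H = rot_hyp_mean_curv_sq[OF I u diff r' W(1,2) unit ru]
  show "lorentz_at (rot_hyp r x2 x4) u v"
    using H(1) .
  show "ip42 (mean_curv (rot_hyp r x2 x4) u v) (mean_curv (rot_hyp r x2 x4) u v) = s * C\<^sup>2"
    unfolding H(2) using RW Rfun_eq_iff_mean_curv[of r u] ru by simp
qed

lemma rot_hyp_cmc_of_hyperbolic_angle_construction:
  assumes I: "open I" and r: "smooth_real_on I r" "\<forall>u\<in>I. r u > 0"
    and \<eta>: "\<eta> \<in> {1, -1}" and R: "\<forall>u\<in>I. Rfun r C s u > 0"
    and \<phi>: "\<forall>u\<in>I. (\<phi> has_real_derivative \<eta> * sqrt (Rfun r C s u) / (r u * ((deriv r u)\<^sup>2 - 1))) (at u)"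
    and x: "(\<forall>u\<in>I. (deriv r u)\<^sup>2 > 1 \<and>
          (x2 has_real_derivative sqrt ((deriv r u)\<^sup>2 - 1) * sinh (\<phi> u)) (at u) \<and>
          (x4 has_real_derivative sqrt ((deriv r u)\<^sup>2 - 1) * cosh (\<phi> u)) (at u))
      \<or> (\<forall>u\<in>I. (deriv r u)\<^sup>2 < 1 \<and>
          (x2 has_real_derivative sqrt (1 - (deriv r u)\<^sup>2) * cosh (\<phi> u)) (at u) \<and>
          (x4 has_real_derivative sqrt (1 - (deriv r u)\<^sup>2) * sinh (\<phi> u)) (at u))"
  shows "\<forall>u\<in>I. spacelike (vector_derivative (gen_curve r x2 x4) (at u)) \<and>
      ip42 (vector_derivative (gen_curve r x2 x4) (at u)) (vector_derivative (gen_curve r x2 x4) (at u)) = 1 \<and>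
      wronskian x2 x4 u \<noteq> 0 \<and>
      (\<forall>v. lorentz_at (rot_hyp r x2 x4) u v \<and>
         ip42 (mean_curv (rot_hyp r x2 x4) u v) (mean_curv (rot_hyp r x2 x4) u v) = s * C\<^sup>2)"
proof -
  have "hyperbolic_angle_curve I r 1 \<phi> x2 x4"
    using x unfolding hyperbolic_angle_curve_def by (auto simp: DERIV_imp_deriv)
  moreover have "\<forall>u\<in>I. x2 differentiable (at u) \<and> x4 differentiable (at u)"
    using x by (auto simp: real_differentiable_def)
  ultimately show ?thesis
    using rot_hyp_cmc_of_hyperbolic_angle_curve[OF I r \<eta> R \<phi>] by (simp add: spacelike_def)
qed

lemma solve_angle_derivative:
  fixes \<rho> p W \<phi>' R \<epsilon> \<sigma> :: real
  assumes \<rho>: "\<rho> > 0" and p: "p\<^sup>2 \<noteq> 1" and \<epsilon>: "\<epsilon> \<in> {1, -1}" and \<sigma>: "\<sigma> \<in> {1, -1}"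
    and W: "\<sigma> * W > 0" "W = - \<epsilon> * (p\<^sup>2 - 1) * \<phi>'" and R: "R = (\<rho> * W)\<^sup>2"
  shows "R > 0 \<and> \<phi>' = - \<epsilon> * \<sigma> * sqrt R / (\<rho> * (p\<^sup>2 - 1))"
proof
  show "R > 0"
    using R W(1) \<rho> by auto
  have "\<bar>W\<bar> = \<sigma> * W"
    using \<sigma> W(1) by auto
  then have "sqrt R = \<rho> * (\<sigma> * W)"
    unfolding R using \<rho> by (simp add: abs_mult)
  moreover have "- \<epsilon> * \<sigma> * (\<rho> * (\<sigma> * W)) / (\<rho> * (p\<^sup>2 - 1)) = (\<epsilon> * \<epsilon>) * (\<sigma> * \<sigma>) * \<phi>'"
    unfolding W(2) using \<rho> p by (simp add: field_simps)
  moreover have "\<epsilon> * \<epsilon> = 1" "\<sigma> * \<sigma> = 1"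
    using \<epsilon> \<sigma> by auto
  ultimately show "\<phi>' = - \<epsilon> * \<sigma> * sqrt R / (\<rho> * (p\<^sup>2 - 1))"
    by simp
qed

lemma hyperbolic_angle_curve_of_rot_hyp_cmc:
  assumes I: "open I" "is_interval I"
    and smooth: "smooth_real_on I r" "smooth_real_on I x2" "smooth_real_on I x4"
    and r: "\<forall>u\<in>I. r u > 0 \<and> (deriv r u)\<^sup>2 \<noteq> 1"
    and unit: "\<forall>u\<in>I. (deriv r u)\<^sup>2 + (deriv x2 u)\<^sup>2 - (deriv x4 u)\<^sup>2 = 1"
    and W: "\<forall>u\<in>I. wronskian x2 x4 u \<noteq> 0"
    and c: "c \<noteq> 0"
    and H: "\<forall>u\<in>I. \<forall>v. ip42 (mean_curv (rot_hyp r x2 x4) u v) (mean_curv (rot_hyp r x2 x4) u v) = c"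
  shows "\<exists>C s \<eta> \<epsilon> \<phi>. C \<noteq> 0 \<and> s \<in> {1, -1} \<and> \<eta> \<in> {1, -1} \<and> \<epsilon> \<in> {1, -1} \<and>
    (\<forall>u\<in>I. Rfun r C s u > 0 \<and>
       (\<phi> has_real_derivative \<eta> * sqrt (Rfun r C s u) / (r u * ((deriv r u)\<^sup>2 - 1))) (at u)) \<and>
    hyperbolic_angle_curve I r \<epsilon> \<phi> x2 x4"
proof -
  obtain \<epsilon> \<phi> where \<epsilon>: "\<epsilon> \<in> {1, -1}" and \<phi>: "\<forall>u\<in>I. \<phi> differentiable (at u)"
    and curve: "hyperbolic_angle_curve I r \<epsilon> \<phi> x2 x4"
    using exists_hyperbolic_angle_curve[OF I(2) smooth] r unit by blast
  have "continuous_on I (wronskian x2 x4)"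
    using smooth_real_on_continuous_on_deriv[OF smooth(2)] smooth_real_on_continuous_on_deriv[OF smooth(3)]
    by (intro continuous_intros)
  then obtain \<sigma> where \<sigma>: "\<sigma> \<in> {1, -1}" "\<forall>u\<in>I. \<sigma> * wronskian x2 x4 u > 0"
    using W by (rule continuous_nonvanishing_sign[OF I(2)])
  define C where "C = sqrt \<bar>c\<bar>"
  define s where "s = sgn c"
  have sC: "s * C\<^sup>2 = c"
    unfolding C_def s_def by (simp add: sgn_mult_abs)
  have "Rfun r C s u > 0 \<and>
      (\<phi> has_real_derivative - \<epsilon> * \<sigma> * sqrt (Rfun r C s u) / (r u * ((deriv r u)\<^sup>2 - 1))) (at u)"
    if u: "u \<in> I" for u
  proof -
    have ru: "r u > 0" "(deriv r u)\<^sup>2 \<noteq> 1"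
      using r u by auto
    have diff: "\<forall>t\<in>I. r differentiable (at t) \<and> x2 differentiable (at t) \<and> x4 differentiable (at t)"
      using smooth_real_onD(1) smooth by blast
    have r': "deriv r differentiable (at u)"
      using smooth_real_onD(2)[OF smooth(1) u] .
    have \<phi>': "(\<phi> has_real_derivative deriv \<phi> u) (at u)"
      using \<phi> u by (simp add: deriv_has_real_derivative)
    note Wr = hyperbolic_angle_curve_wronskian[OF curve I(1) u r' \<phi>']
    note Hr = rot_hyp_mean_curv_sq[OF I(1) u diff r' Wr(1,2) unit ru, of 0]
    have "Rfun r C s u = (r u * wronskian x2 x4 u)\<^sup>2"
      using Rfun_eq_iff_mean_curv[of r u] ru H u Hr(2) sC by simp
    then show ?thesis
      using solve_angle_derivative[OF ru \<epsilon> \<sigma>(1) _ Wr(3)] \<sigma>(2) \<phi>' u by simp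
  qed
  moreover have "C \<noteq> 0" "s \<in> {1, -1}" "- \<epsilon> * \<sigma> \<in> {1, -1}"
    unfolding C_def s_def using c \<epsilon> \<sigma>(1) by (auto simp: sgn_if)
  ultimately show ?thesis
    using \<epsilon> curve by blast
qed

theorem theorem3p2:
  shows
  "(\<forall>(I::real set) r C s \<eta> \<phi> x2 x4.
      open I \<and> is_interval I \<and> I \<noteq> {} \<and>
      smooth_real_on I r \<and> (\<forall>u\<in>I. r u > 0 \<and> (deriv r u)^2 \<noteq> 1) \<and>
      C \<noteq> 0 \<and> s \<in> {1, -1} \<and> \<eta> \<in> {1, -1} \<and>
      (\<forall>u\<in>I. Rfun r C s u > 0) \<and>
      (\<forall>u\<in>I. (\<phi> has_real_derivative
                 \<eta> * sqrt (Rfun r C s u) / (r u * ((deriv r u)^2 - 1))) (at u)) \<and>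
      ((\<forall>u\<in>I. (deriv r u)^2 > 1 \<and>
          (x2 has_real_derivative sqrt ((deriv r u)^2 - 1) * sinh (\<phi> u)) (at u) \<and>
          (x4 has_real_derivative sqrt ((deriv r u)^2 - 1) * cosh (\<phi> u)) (at u))
       \<or>
       (\<forall>u\<in>I. (deriv r u)^2 < 1 \<and>
          (x2 has_real_derivative sqrt (1 - (deriv r u)^2) * cosh (\<phi> u)) (at u) \<and>
          (x4 has_real_derivative sqrt (1 - (deriv r u)^2) * sinh (\<phi> u)) (at u)))
    \<longrightarrow>
      (\<forall>u\<in>I.
         spacelike (vector_derivative (gen_curve r x2 x4) (at u)) \<and>
         ip42 (vector_derivative (gen_curve r x2 x4) (at u))
              (vector_derivative (gen_curve r x2 x4) (at u)) = 1 \<and>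
         deriv x2 u * deriv (deriv x4) u - deriv (deriv x2) u * deriv x4 u \<noteq> 0 \<and>
         (\<forall>v. lorentz_at (rot_hyp r x2 x4) u v \<and>
              ip42 (mean_curv (rot_hyp r x2 x4) u v) (mean_curv (rot_hyp r x2 x4) u v)
                = s * C^2)))
   \<and>
   (\<forall>(J::real set) (I::real set) r x2 x4 c.
      open J \<and> is_interval J \<and> open I \<and> is_interval I \<and> I \<noteq> {} \<and> I \<subseteq> J \<and>
      smooth_real_on J r \<and> smooth_real_on J x2 \<and> smooth_real_on J x4 \<and>
      (\<forall>u\<in>J. r u > 0 \<and> (deriv r u)^2 \<noteq> 1 \<and>
               spacelike (vector_derivative (gen_curve r x2 x4) (at u)) \<and>
               (deriv r u)^2 + (deriv x2 u)^2 - (deriv x4 u)^2 = 1) \<and>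
      (\<forall>u\<in>I. deriv x2 u * deriv (deriv x4) u - deriv (deriv x2) u * deriv x4 u \<noteq> 0) \<and>
      c \<noteq> 0 \<and>
      (\<forall>u\<in>I. \<forall>v. ip42 (mean_curv (rot_hyp r x2 x4) u v) (mean_curv (rot_hyp r x2 x4) u v) = c)
    \<longrightarrow>
      (\<forall>u0\<in>I. \<exists>I0. open I0 \<and> is_interval I0 \<and> u0 \<in> I0 \<and> I0 \<subseteq> I \<and>
         (\<exists>C s \<eta> \<epsilon> \<phi>. C \<noteq> 0 \<and> s \<in> {1, -1} \<and> \<eta> \<in> {1, -1} \<and> \<epsilon> \<in> {1, -1} \<and>
            (\<forall>u\<in>I0. Rfun r C s u > 0 \<and>
               (\<phi> has_real_derivative
                  \<eta> * sqrt (Rfun r C s u) / (r u * ((deriv r u)^2 - 1))) (at u)) \<and>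
            ((\<forall>u\<in>I0. (deriv r u)^2 > 1 \<and>
                deriv x2 u = sqrt ((deriv r u)^2 - 1) * sinh (\<phi> u) \<and>
                deriv x4 u = \<epsilon> * (sqrt ((deriv r u)^2 - 1) * cosh (\<phi> u)))
             \<or>
             (\<forall>u\<in>I0. (deriv r u)^2 < 1 \<and>
                deriv x2 u = \<epsilon> * (sqrt (1 - (deriv r u)^2) * cosh (\<phi> u)) \<and>
                deriv x4 u = sqrt (1 - (deriv r u)^2) * sinh (\<phi> u))))))"
  apply (intro conjI allI impI; elim conjE)
  subgoal
    by (rule rot_hyp_cmc_of_hyperbolic_angle_construction) auto
  subgoal premises prems for J I r x2 x4 c
  proof -
    txt \<open>The construction works on all of I, so I0 = I.\<close>
    have "\<exists>C s \<eta> \<epsilon> \<phi>. C \<noteq> 0 \<and> s \<in> {1, -1} \<and> \<eta> \<in> {1, -1} \<and> \<epsilon> \<in> {1, -1} \<and>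
      (\<forall>u\<in>I. Rfun r C s u > 0 \<and>
         (\<phi> has_real_derivative \<eta> * sqrt (Rfun r C s u) / (r u * ((deriv r u)\<^sup>2 - 1))) (at u)) \<and>
      hyperbolic_angle_curve I r \<epsilon> \<phi> x2 x4"
      using prems smooth_real_on_subset[of J _ I]
      by (intro hyperbolic_angle_curve_of_rot_hyp_cmc) auto
    with prems show ?thesis
      unfolding hyperbolic_angle_curve_def by blast
  qed
  done

end
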